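(* Let $d\in\mathbb{N}$ and let $\mathcal{M},\mathcal{G}\subseteq\mathbb{N}_0^d$ be non-empty games. Then $\mathcal{M}^\infty=\mathcal{G}^\infty$ if and only if $\min(\mathcal{M})=\min(\mathcal{G})$.
   Context: For $d\in\mathbb{N}$ a game is a set $\mathcal{M}\subseteq\mathbb{N}_0^d$ of moves. From position $\boldsymbol x$ a player may move to $\boldsymbol y\in\mathbb{N}_0^d$ iff $\boldsymbol x-\boldsymbol y\in\mathcal{M}$. Misère play: a player who cannot move wins. If $\boldsymbol 0\in\mathcal{M}$, $P(\mathcal{M})=\varnothing$. Otherwise: a position is an N-position if it has no option or some option is a P-position; otherwise it is a P-position; $P(\mathcal{M})$ denotes the set of P-positions. The $\star$-operator is $\mathcal{M}^\star=P(\mathcal{M})$; $\mathcal{M}^0=\mathcal{M}$, $\mathcal{M}^i=(\mathcal{M}^{i-1})^\star$. $\mathcal{M}^\infty=\lim_i\mathcal{M}^i$ is the pointwise limit (the set of $\boldsymbol x$ lying in $\mathcal{M}^i$ for all sufficiently large $i$, where every $\boldsymbol x$ is eventually always in or eventually always out); it always exists. $\min(S)$ is the set of minimal elements of $S$ under the componentwise partial order. *)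

theory Defs
  imports Main
begin

text \<open>Positions in N_0^d are functions 'd \<Rightarrow> nat for a finite index type 'd
  (d = CARD('d) \<ge> 1). The order on functions is the componentwise order.\<close>

type_synonym 'd pos = "'d \<Rightarrow> nat"

text \<open>From x one may move to y iff x - y \<in> M (with y \<in> N_0^d), i.e. x = y + m for some m \<in> M.\<close>
definition options :: "'d pos set \<Rightarrow> 'd pos \<Rightarrow> 'd pos set" where
  "options M x = {y. \<exists>m\<in>M. \<forall>k. x k = y k + m k}"

text \<open>The set of P-positions (misere play): empty if 0 \<in> M; otherwise the unique set S
  with x \<in> S iff x has an option and no option of x lies in S (the recursive definition).\<close>
definition Ppos :: "'d pos set \<Rightarrow> 'd pos set" where
  "Ppos M = (if (\<lambda>_. 0) \<in> M then {}
     else (THE S. \<forall>x. x \<in> S \<longleftrightarrow> (options M x \<noteq> {} \<and> (\<forall>y\<in>options M x. y \<notin> S))))"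

definition star_iter :: "nat \<Rightarrow> 'd pos set \<Rightarrow> 'd pos set" where
  "star_iter i M = (Ppos ^^ i) M"

definition star_inf :: "'d pos set \<Rightarrow> 'd pos set" where
  "star_inf M = {x. \<exists>N. \<forall>i\<ge>N. x \<in> star_iter i M}"

definition minimal_elems :: "'d pos set \<Rightarrow> 'd pos set" where
  "minimal_elems S = {x\<in>S. \<forall>y\<in>S. y \<le> x \<longrightarrow> y = x}"

end

theory Submission
  imports Defs
begin

text \<open>A move \<open>m\<close> from \<open>x\<close> to a P-position \<open>x - m\<close> leaves room for a further move, so
  \<open>m\<close> is strictly lighter than \<open>x\<close> (in the coordinate sum). Hence whether \<open>x\<close> is a
  P-position of a game without \<open>0\<close> depends only on the moves lighter than \<open>x\<close> and on whether
  some move lies below \<open>x\<close>, which is decided by the minimal moves. The minimal moves of a game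
  are themselves P-positions and every P-position lies above one, so \<open>min(M\<^sup>\<star>) = min(M)\<close>.
  Consequently all iterates \<open>M\<^sup>i\<close>, and \<open>M\<^sup>\<infinity>\<close>, have the same minimal elements as \<open>M\<close>,
  and by induction on \<open>k\<close> two games with the same minimal moves have iterates \<open>M\<^sup>i\<close>, \<open>G\<^sup>i\<close>
  that agree on all positions of weight below \<open>k\<close> once \<open>i \<ge> k\<close>. If \<open>0\<close> is a move, all
  iterates from the first on are empty.\<close>

definition weight :: "'d::finite pos \<Rightarrow> nat" where
  "weight x = (\<Sum>k\<in>UNIV. x k)"

lemma weight_mono: "y \<le> x \<Longrightarrow> weight y \<le> weight x"
  by (simp add: weight_def le_fun_def sum_mono)

lemma weight_strict_mono:
  assumes "y < x"
  shows "weight y < weight x"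
proof -
  from assms obtain k where "y k < x k" "y \<le> x"
    by (auto simp: less_fun_def le_fun_def not_le)
  then show ?thesis
    unfolding weight_def by (intro sum_strict_mono_ex1) (auto simp: le_fun_def)
qed

lemma weight_pos: "x \<noteq> (\<lambda>_. 0) \<Longrightarrow> 0 < weight x"
  using weight_strict_mono[of "\<lambda>_. 0" x] by (auto simp: weight_def less_fun_def le_fun_def)

lemma weight_diff: "m \<le> x \<Longrightarrow> weight (x - m) = weight x - weight m"
  by (simp add: weight_def le_fun_def sum_subtractf_nat)

lemma weight_diff_less: "m \<le> x \<Longrightarrow> m \<noteq> (\<lambda>_. 0) \<Longrightarrow> weight (x - m) < weight x"
  using weight_diff weight_pos weight_mono by (metis diff_less le_zero_eq not_gr_zero)

lemma options_eq: "options M x = {x - m |m. m \<in> M \<and> m \<le> x}"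
  by (force simp: options_def le_fun_def fun_eq_iff)

text \<open>The guard \<open>m \<noteq> (\<lambda>_. 0)\<close> only ensures termination; it is vacuous for the games
  where this recursion is used.\<close>
function P_position :: "'d::finite pos set \<Rightarrow> 'd pos \<Rightarrow> bool" where
  "P_position M x \<longleftrightarrow> (\<exists>m\<in>M. m \<le> x) \<and>
     (\<forall>m\<in>M. m \<le> x \<longrightarrow> m \<noteq> (\<lambda>_. 0) \<longrightarrow> \<not> P_position M (x - m))"
  by auto
termination
  by (relation "measure (\<lambda>(M, x). weight x)") (auto intro: weight_diff_less)

declare P_position.simps [simp del]

lemma P_position_iff:
  assumes "(\<lambda>_. 0) \<notin> M"
  shows "P_position M x \<longleftrightarrow> (\<exists>m\<in>M. m \<le> x) \<and> (\<forall>m\<in>M. m \<le> x \<longrightarrow> \<not> P_position M (x - m))"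
  using assms by (subst P_position.simps) auto

lemma Ppos_eq_P_position:
  assumes "(\<lambda>_. 0) \<notin> M"
  shows "Ppos M = {x. P_position M x}"
proof -
  let ?rec = "\<lambda>S. \<forall>x. x \<in> S \<longleftrightarrow> options M x \<noteq> {} \<and> (\<forall>y\<in>options M x. y \<notin> S)"
  have rec_iff: "?rec S \<longleftrightarrow> (\<forall>x. x \<in> S \<longleftrightarrow> (\<exists>m\<in>M. m \<le> x) \<and> (\<forall>m\<in>M. m \<le> x \<longrightarrow> x - m \<notin> S))"
    for S by (auto simp: options_eq)
  have P_rec: "?rec {x. P_position M x}"
    unfolding rec_iff using P_position_iff[OF assms] by blast
  have unique: "S = {x. P_position M x}" if "?rec S" for S
  proof -
    have "x \<in> S \<longleftrightarrow> P_position M x" for x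
    proof (induction x rule: measure_induct_rule[of weight])
      case (less x)
      have IH: "x - m \<in> S \<longleftrightarrow> P_position M (x - m)" if "m \<in> M" "m \<le> x" for m
      proof -
        have "m \<noteq> (\<lambda>_. 0)" using that assms by auto
        with less that show ?thesis using weight_diff_less by blast
      qed
      have "x \<in> S \<longleftrightarrow> (\<exists>m\<in>M. m \<le> x) \<and> (\<forall>m\<in>M. m \<le> x \<longrightarrow> x - m \<notin> S)"
        using \<open>?rec S\<close> unfolding rec_iff by blast
      also have "\<dots> \<longleftrightarrow> (\<exists>m\<in>M. m \<le> x) \<and> (\<forall>m\<in>M. m \<le> x \<longrightarrow> \<not> P_position M (x - m))"
        using IH by blast
      also have "\<dots> \<longleftrightarrow> P_position M x"
        by (rule P_position_iff[OF assms, symmetric])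
      finally show ?case .
    qed
    then show ?thesis by auto
  qed
  have "(THE S. ?rec S) = {x. P_position M x}"
    using P_rec unique by (rule the_equality[where P = ?rec])
  with assms show ?thesis
    by (simp add: Ppos_def)
qed

lemma Ppos_iff:
  fixes M :: "'d::finite pos set"
  assumes "(\<lambda>_. 0) \<notin> M"
  shows "x \<in> Ppos M \<longleftrightarrow> (\<exists>m\<in>M. m \<le> x) \<and> (\<forall>m\<in>M. m \<le> x \<longrightarrow> x - m \<notin> Ppos M)"
  unfolding Ppos_eq_P_position[OF assms] mem_Collect_eq by (rule P_position_iff[OF assms])

lemma Ppos_zero_mem: "(\<lambda>_. 0) \<in> M \<Longrightarrow> Ppos M = {}"
  by (simp add: Ppos_def)

lemma Ppos_empty: "Ppos ({} :: 'd::finite pos set) = {}"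
  using Ppos_iff[of "{} :: 'd pos set"] by blast

lemma le_zero_pos_iff: "x \<le> (\<lambda>_. 0) \<longleftrightarrow> x = (\<lambda>_. 0)"
  for x :: "'d pos"
  by (simp add: le_fun_def fun_eq_iff)

lemma zero_notin_Ppos:
  fixes M :: "'d::finite pos set"
  shows "(\<lambda>_. 0) \<notin> Ppos M"
proof (cases "(\<lambda>_. 0) \<in> M")
  case False
  show ?thesis
  proof
    assume "(\<lambda>_. 0) \<in> Ppos M"
    then obtain m where "m \<in> M" "m \<le> (\<lambda>_. 0)"
      using Ppos_iff[OF False] by blast
    with False show False
      by (simp add: le_zero_pos_iff)
  qed
qed (simp add: Ppos_zero_mem)

lemma minimal_elem_below:
  fixes S :: "'d::finite pos set"
  shows "s \<in> S \<Longrightarrow> \<exists>a\<in>minimal_elems S. a \<le> s"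
proof (induction s rule: measure_induct_rule[of weight])
  case (less s)
  show ?case
  proof (cases "s \<in> minimal_elems S")
    case False
    with less.prems obtain y where "y \<in> S" "y < s"
      by (auto simp: minimal_elems_def less_le)
    moreover from this obtain a where "a \<in> minimal_elems S" "a \<le> y"
      using less.IH weight_strict_mono by blast
    ultimately show ?thesis
      by (meson less_imp_le order_trans)
  qed auto
qed

lemma ex_minimal_elem_le_iff:
  fixes S :: "'d::finite pos set"
  shows "(\<exists>a\<in>minimal_elems S. a \<le> x) \<longleftrightarrow> (\<exists>s\<in>S. s \<le> x)"
proof
  assume "\<exists>s\<in>S. s \<le> x"
  then show "\<exists>a\<in>minimal_elems S. a \<le> x"
    using minimal_elem_below order_trans by metis
qed (auto simp: minimal_elems_def)

lemma minimal_elems_eqI: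
  fixes M S :: "'d::finite pos set"
  assumes sub: "minimal_elems M \<subseteq> S" and above: "\<And>x. x \<in> S \<Longrightarrow> \<exists>a\<in>minimal_elems M. a \<le> x"
  shows "minimal_elems S = minimal_elems M"
proof (intro set_eqI iffI)
  fix x assume x: "x \<in> minimal_elems S"
  then obtain a where a: "a \<in> minimal_elems M" "a \<le> x"
    using above unfolding minimal_elems_def by blast
  with sub x have "a = x"
    by (auto simp: minimal_elems_def)
  with a show "x \<in> minimal_elems M"
    by simp
next
  fix x assume x: "x \<in> minimal_elems M"
  have "y = x" if y: "y \<in> S" "y \<le> x" for y
  proof -
    obtain a where a: "a \<in> minimal_elems M" "a \<le> y"
      using above y(1) by blast
    from a(2) y(2) have "a \<le> x"
      by (rule order_trans)
    with a(1) x have "a = x"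
      by (auto simp: minimal_elems_def)
    with a(2) y(2) show "y = x"
      by simp
  qed
  with x sub show "x \<in> minimal_elems S"
    by (auto simp: minimal_elems_def)
qed

lemma minimal_elems_eq_zero_iff:
  fixes M :: "'d::finite pos set"
  shows "minimal_elems M = {\<lambda>_. 0} \<longleftrightarrow> (\<lambda>_. 0) \<in> M"
proof
  assume "(\<lambda>_. 0) \<in> M"
  moreover have "(\<lambda>_. 0) \<le> x" for x :: "'d pos"
    by (simp add: le_fun_def)
  ultimately show "minimal_elems M = {\<lambda>_. 0}"
    by (auto simp: minimal_elems_def le_zero_pos_iff)
qed (auto simp: minimal_elems_def)

lemma minimal_elems_Ppos:
  fixes M :: "'d::finite pos set"
  assumes "(\<lambda>_. 0) \<notin> M"
  shows "minimal_elems (Ppos M) = minimal_elems M"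
proof (rule minimal_elems_eqI)
  show "minimal_elems M \<subseteq> Ppos M"
  proof
    fix a assume a: "a \<in> minimal_elems M"
    have "a - m \<notin> Ppos M" if "m \<in> M" "m \<le> a" for m
    proof -
      from a that have "a - m = (\<lambda>_. 0)"
        by (auto simp: minimal_elems_def fun_eq_iff)
      then show ?thesis
        by (simp add: zero_notin_Ppos)
    qed
    moreover have "a \<in> M"
      using a by (simp add: minimal_elems_def)
    ultimately show "a \<in> Ppos M"
      using Ppos_iff[OF assms, of a] by blast
  qed
  show "\<exists>a\<in>minimal_elems M. a \<le> x" if "x \<in> Ppos M" for x
    using that Ppos_iff[OF assms] ex_minimal_elem_le_iff by blast
qed

lemma star_iter_0 [simp]: "star_iter 0 M = M"
  by (simp add: star_iter_def)

lemma star_iter_Suc [simp]: "star_iter (Suc i) M = Ppos (star_iter i M)"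
  by (simp add: star_iter_def)

lemma zero_notin_star_iter:
  fixes M :: "'d::finite pos set"
  shows "(\<lambda>_. 0) \<notin> M \<Longrightarrow> (\<lambda>_. 0) \<notin> star_iter i M"
  by (cases i) (simp_all add: zero_notin_Ppos)

lemma minimal_elems_star_iter:
  fixes M :: "'d::finite pos set"
  assumes "(\<lambda>_. 0) \<notin> M"
  shows "minimal_elems (star_iter i M) = minimal_elems M"
  by (induction i) (simp_all add: minimal_elems_Ppos zero_notin_star_iter assms)

lemma star_iter_zero_mem:
  fixes M :: "'d::finite pos set"
  assumes "(\<lambda>_. 0) \<in> M"
  shows "star_iter (Suc i) M = {}"
  by (induction i) (simp_all add: Ppos_zero_mem Ppos_empty assms)

lemma star_inf_zero_mem:
  fixes M :: "'d::finite pos set"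
  assumes "(\<lambda>_. 0) \<in> M"
  shows "star_inf M = {}"
proof (intro equalityI subsetI)
  fix x assume "x \<in> star_inf M"
  then obtain N where "\<forall>i\<ge>N. x \<in> star_iter i M"
    by (auto simp: star_inf_def)
  then have "x \<in> star_iter (Suc N) M"
    using le_SucI by blast
  with assms show "x \<in> {}"
    by (simp only: star_iter_zero_mem)
qed simp

lemma minimal_elems_subset_star_inf:
  fixes M :: "'d::finite pos set"
  assumes "(\<lambda>_. 0) \<notin> M"
  shows "minimal_elems M \<subseteq> star_inf M"
proof
  fix a assume "a \<in> minimal_elems M"
  then have "a \<in> minimal_elems (star_iter i M)" for i
    by (simp add: minimal_elems_star_iter assms)
  then show "a \<in> star_inf M"
    by (simp add: star_inf_def minimal_elems_def)
qed

lemma minimal_elems_star_inf: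
  fixes M :: "'d::finite pos set"
  assumes "(\<lambda>_. 0) \<notin> M"
  shows "minimal_elems (star_inf M) = minimal_elems M"
proof (rule minimal_elems_eqI[OF minimal_elems_subset_star_inf[OF assms]])
  fix x assume "x \<in> star_inf M"
  then obtain N where "x \<in> star_iter N M"
    by (auto simp: star_inf_def)
  then show "\<exists>a\<in>minimal_elems M. a \<le> x"
    using minimal_elem_below minimal_elems_star_iter[OF assms] by metis
qed

lemma star_inf_eq_empty_iff:
  fixes M :: "'d::finite pos set"
  assumes "M \<noteq> {}"
  shows "star_inf M = {} \<longleftrightarrow> (\<lambda>_. 0) \<in> M"
proof
  assume "star_inf M = {}"
  moreover obtain m where "m \<in> M"
    using assms by blast
  ultimately show "(\<lambda>_. 0) \<in> M"
    using minimal_elem_below minimal_elems_subset_star_inf by blast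
qed (rule star_inf_zero_mem)

lemma weight_lt_of_move_to_Ppos:
  fixes M :: "'d::finite pos set"
  assumes zM: "(\<lambda>_. 0) \<notin> M" and m: "m \<in> M" "m \<le> x" "x - m \<in> Ppos M"
  shows "weight m < weight x"
proof -
  obtain a where a: "a \<in> M" "a \<le> x - m"
    using m(3) Ppos_iff[OF zM] by blast
  have "m \<le> x - a"
  proof (rule le_funI)
    fix k
    from a(2) m(2) have "a k \<le> x k - m k" "m k \<le> x k"
      by (simp_all add: le_fun_def)
    then show "m k \<le> (x - a) k"
      by simp
  qed
  moreover have "a \<le> x"
    using a(2) by (rule order_trans) (simp add: le_fun_def)
  moreover have "a \<noteq> (\<lambda>_. 0)"
    using a(1) zM by blast
  ultimately have "weight m \<le> weight (x - a)" "weight (x - a) < weight x"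
    by (simp_all add: weight_mono weight_diff_less)
  then show ?thesis
    by simp
qed

lemma Ppos_agree_upto:
  fixes M G :: "'d::finite pos set"
  assumes zM: "(\<lambda>_. 0) \<notin> M" and zG: "(\<lambda>_. 0) \<notin> G"
    and mins: "minimal_elems M = minimal_elems G"
    and agree: "\<And>y. weight y < k \<Longrightarrow> y \<in> M \<longleftrightarrow> y \<in> G"
  shows "weight x \<le> k \<Longrightarrow> x \<in> Ppos M \<longleftrightarrow> x \<in> Ppos G"
proof (induction x rule: measure_induct_rule[of weight])
  case (less x)
  have IH: "x - m \<in> Ppos M \<longleftrightarrow> x - m \<in> Ppos G" if "m \<le> x" "m \<noteq> (\<lambda>_. 0)" for m
  proof -
    have lt: "weight (x - m) < weight x"
      using that by (rule weight_diff_less)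
    with less.prems have "weight (x - m) \<le> k"
      by linarith
    with lt show ?thesis
      by (rule less.IH)
  qed
  have moves: "(\<exists>m\<in>M. m \<le> x) \<longleftrightarrow> (\<exists>m\<in>G. m \<le> x)"
    using ex_minimal_elem_le_iff[of M x] ex_minimal_elem_le_iff[of G x] mins by simp
  have winning: "(\<exists>m\<in>M. m \<le> x \<and> x - m \<in> Ppos M) \<longleftrightarrow> (\<exists>m\<in>G. m \<le> x \<and> x - m \<in> Ppos G)"
  proof
    assume "\<exists>m\<in>M. m \<le> x \<and> x - m \<in> Ppos M"
    then obtain m where m: "m \<in> M" "m \<le> x" "x - m \<in> Ppos M"
      by blast
    with weight_lt_of_move_to_Ppos[OF zM m] less.prems have "m \<in> G"
      using agree by simp
    moreover have "x - m \<in> Ppos G"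
      using m IH[of m] zM by auto
    ultimately show "\<exists>m\<in>G. m \<le> x \<and> x - m \<in> Ppos G"
      using m(2) by blast
  next
    assume "\<exists>m\<in>G. m \<le> x \<and> x - m \<in> Ppos G"
    then obtain m where m: "m \<in> G" "m \<le> x" "x - m \<in> Ppos G"
      by blast
    with weight_lt_of_move_to_Ppos[OF zG m] less.prems have "m \<in> M"
      using agree by simp
    moreover have "x - m \<in> Ppos M"
      using m IH[of m] zG by auto
    ultimately show "\<exists>m\<in>M. m \<le> x \<and> x - m \<in> Ppos M"
      using m(2) by blast
  qed
  show ?case
    using Ppos_iff[OF zM, of x] Ppos_iff[OF zG, of x] moves winning by blast
qed

lemma star_iter_agree:
  fixes M G :: "'d::finite pos set"
  assumes zM: "(\<lambda>_. 0) \<notin> M" and zG: "(\<lambda>_. 0) \<notin> G"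
    and mins: "minimal_elems M = minimal_elems G"
  shows "k \<le> i \<Longrightarrow> weight x < k \<Longrightarrow> x \<in> star_iter i M \<longleftrightarrow> x \<in> star_iter i G"
proof (induction k arbitrary: i x)
  case (Suc k)
  then obtain j where j: "i = Suc j" "k \<le> j"
    by (cases i) auto
  have mins_j: "minimal_elems (star_iter j M) = minimal_elems (star_iter j G)"
    using mins by (simp add: minimal_elems_star_iter zM zG)
  have agree_j: "\<And>y. weight y < k \<Longrightarrow> y \<in> star_iter j M \<longleftrightarrow> y \<in> star_iter j G"
    using Suc.IH j(2) by blast
  from Suc.prems(2) have "weight x \<le> k"
    by simp
  with agree_j have "x \<in> Ppos (star_iter j M) \<longleftrightarrow> x \<in> Ppos (star_iter j G)"
    by (rule Ppos_agree_upto[OF zero_notin_star_iter[OF zM] zero_notin_star_iter[OF zG] mins_j])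
  with j(1) show ?case
    by simp
qed simp

lemma star_inf_eqI:
  fixes M G :: "'d::finite pos set"
  assumes zM: "(\<lambda>_. 0) \<notin> M" and zG: "(\<lambda>_. 0) \<notin> G"
    and mins: "minimal_elems M = minimal_elems G"
  shows "star_inf M = star_inf G"
proof -
  have "\<forall>\<^sub>F i in sequentially. x \<in> star_iter i M \<longleftrightarrow> x \<in> star_iter i G" for x
    using star_iter_agree[OF assms, of "Suc (weight x)"] by (auto simp: eventually_sequentially)
  then have "(\<forall>\<^sub>F i in sequentially. x \<in> star_iter i M) \<longleftrightarrow> (\<forall>\<^sub>F i in sequentially. x \<in> star_iter i G)" for x
    by (rule eventually_subst)
  then show ?thesis
    unfolding star_inf_def eventually_sequentially[symmetric] by simp
qed

theorem theorem5:
  fixes M G :: "('d::finite \<Rightarrow> nat) set"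
  assumes "M \<noteq> {}" and "G \<noteq> {}"
  shows "star_inf M = star_inf G \<longleftrightarrow> minimal_elems M = minimal_elems G"
proof (cases "(\<lambda>_. 0) \<in> M \<or> (\<lambda>_. 0) \<in> G")
  case True
  then have "star_inf M = star_inf G \<longleftrightarrow> ((\<lambda>_. 0) \<in> M \<longleftrightarrow> (\<lambda>_. 0) \<in> G)"
    using star_inf_eq_empty_iff[OF assms(1)] star_inf_eq_empty_iff[OF assms(2)] by metis
  moreover have "minimal_elems M = minimal_elems G \<longleftrightarrow> ((\<lambda>_. 0) \<in> M \<longleftrightarrow> (\<lambda>_. 0) \<in> G)"
    using True minimal_elems_eq_zero_iff by metis
  ultimately show ?thesis
    by simp
next
  case False
  then show ?thesis
    using minimal_elems_star_inf star_inf_eqI by metis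
qed

end
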